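(* The function $g_1(t)^2$ is increasing and bounded from above and hence converges to a positive constant as $t$ tends to infinity.
   Context: Consider complete Ricci-flat multiple warped product metrics $dt^2 + \sum_{i=1}^{r} g_i^2(t)\, h_i$ on $[0,\infty) \times M_1 \times \cdots \times M_r$ ($r \geq 2$), where $(M_i,h_i)$ are Einstein manifolds of dimension $d_i$ and Einstein constant $\lambda_i$, with $M_1 = S^1$ (so $d_1=1$, $\lambda_1=0$) and $M_2,\ldots,M_r$ closed Einstein manifolds with $\lambda_i>0$, $d_i>1$; $n=\sum_i d_i$. The circle collapses smoothly at $t=0$: $g_1(0)=0$, $\dot g_1(0)=1$, $g_i(0)\neq 0$, $\dot g_i(0)=0$ for $i>1$. With $\xi = -\dot u + \operatorname{tr} L$ (here $u$ constant), variables $X_i = \frac{\sqrt{d_i}}{\xi}\frac{\dot g_i}{g_i}$, $Y_i = \frac{\sqrt{d_i}}{\xi}\frac{1}{g_i}$ satisfy, in a new variable $s$, $X_i' = X_i(\sum_j X_j^2 - 1) + \frac{\lambda_i Y_i^2}{\sqrt{d_i}}$, $Y_i' = Y_i(\sum_j X_j^2 - \frac{X_i}{\sqrt{d_i}})$. The Ricci-flat metrics correspond to the $(r-2)$-parameter family of trajectories emanating (as $s\to-\infty$) from the critical point $X_1=Y_1=1$, $X_i=Y_i=0$ ($i>1$) and lying in the locus $\sum_i X_i^2 + \sum_{i\geq 2}\lambda_i Y_i^2 = 1$, $\sum_i \sqrt{d_i} X_i = 1$, with $X_i, Y_i > 0$; the metric is recovered via $dt = \exp\left(\int_{s^*}^{s}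 \sum_j X_j^2\right) ds$ and $g_i = \frac{\sqrt{d_i}}{Y_i}\exp\left(\int_{s^*}^{s}\sum_j X_j^2\right)$ for a fixed $s^*$, so that $\dot g_i g_i = \frac{\sqrt{d_i}}{\operatorname{tr} L}\frac{X_i}{Y_i^2}$. These trajectories are defined for all $s$, give complete metrics ($t\to\infty$ as $s\to\infty$), and converge as $s\to\infty$ to the point $E$ with $X_1=0$, $X_i=\frac{\sqrt{d_i}}{n-1}$, $Y_i=\sqrt{\frac{n-2}{\lambda_i}}X_i$ ($i\geq 2$). *)

theory Defs
  imports "HOL-Analysis.Analysis"
begin

text \<open>Trajectories are given as X, Y :: real => nat => real, X s i being X_i(s)
  for indices i in {1..r}. The metric is recovered from a trajectory via
  dt = exp(int_{s0}^s sum_j X_j^2) ds and g_i = sqrt(d_i)/Y_i * exp(int_{s0}^s sum_j X_j^2).\<close>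

definition sumsqX :: "nat \<Rightarrow> (real \<Rightarrow> nat \<Rightarrow> real) \<Rightarrow> real \<Rightarrow> real" where
  "sumsqX r X s = (\<Sum>j=1..r. (X s j)^2)"

definition expfac :: "nat \<Rightarrow> (real \<Rightarrow> nat \<Rightarrow> real) \<Rightarrow> real \<Rightarrow> real \<Rightarrow> real" where
  "expfac r X s0 s = exp (LBINT \<sigma>=s0..s. sumsqX r X \<sigma>)"

text \<open>the radial coordinate t as a function of s (normalised so that t(s0) = 0;
  t is only determined up to an additive constant)\<close>
definition tcoord :: "nat \<Rightarrow> (real \<Rightarrow> nat \<Rightarrow> real) \<Rightarrow> real \<Rightarrow> real \<Rightarrow> real" where
  "tcoord r X s0 s = (LBINT \<sigma>=s0..s. expfac r X s0 \<sigma>)"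

definition gwarp :: "nat \<Rightarrow> (nat \<Rightarrow> nat) \<Rightarrow> (real \<Rightarrow> nat \<Rightarrow> real) \<Rightarrow> (real \<Rightarrow> nat \<Rightarrow> real)
    \<Rightarrow> real \<Rightarrow> nat \<Rightarrow> real \<Rightarrow> real" where
  "gwarp r d X Y s0 i s = sqrt (real (d i)) / Y s i * expfac r X s0 s"

end

theory Submission
  imports Defs
begin

text \<open>In the variable s one has (ln g_1)' = \<Sum> X_j^2 - Y_1'/Y_1 = X_1 > 0, so g_1^2 increases along
  the trajectory, and so does t. Near E the term \<lambda>_2 Y_2^2 is bounded below by some \<delta> > 0, hence
  \<Sum> X_j^2 - 1 \<le> -\<delta> and, as \<lambda>_1 = 0, X_1' \<le> -\<delta> X_1. Thus ln g_1 + X_1/\<delta> is eventually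
  nonincreasing, which bounds ln g_1 from above. A bounded increasing function converges to its
  supremum, which is positive since g_1^2 is.\<close>

lemma has_real_derivative_interval_integral:
  fixes f :: "real \<Rightarrow> real" and c :: real
  assumes "\<And>x. isCont f x"
  shows "((\<lambda>u. LBINT y=c..u. f y) has_real_derivative f x) (at x)"
proof -
  let ?a = "min c (x - 1)" and ?b = "max c (x + 1)"
  have "at x within {?a..?b} = at x"
    by (intro at_within_interior) auto
  moreover have "continuous_on {?a..?b} f"
    using assms by (simp add: continuous_at_imp_continuous_on)
  ultimately show ?thesis
    using interval_integral_FTC2[of ?a c ?b f x]
    by (auto simp: has_real_derivative_iff_has_vector_derivative)
qed

lemma mono_bdd_above_tendsto_SUP:
  fixes f :: "real \<Rightarrow> real"
  assumes "mono f" and bdd: "bdd_above (range f)"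
  shows "(f \<longlongrightarrow> (SUP s. f s)) at_top"
proof (rule order_tendstoI)
  fix a assume "a < (SUP s. f s)"
  then obtain s' where "a < f s'"
    using less_cSUP_iff[OF _ bdd] by auto
  then show "\<forall>\<^sub>F s in at_top. a < f s"
    using \<open>mono f\<close> by (auto simp: eventually_at_top_linorder intro: less_le_trans dest: monoD)
next
  fix b assume "(SUP s. f s) < b"
  then show "\<forall>\<^sub>F s in at_top. f s < b"
    using cSUP_upper[OF _ bdd] by (auto intro: always_eventually le_less_trans)
qed

lemma eventually_at_top_strict_mono_reparam:
  fixes T :: "real \<Rightarrow> real"
  assumes "strict_mono T" and "eventually P at_top"
  shows "\<exists>t0. \<forall>s. T s \<ge> t0 \<longrightarrow> P s"
proof -
  obtain s' where "\<And>s. s \<ge> s' \<Longrightarrow> P s"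
    using assms(2) by (auto simp: eventually_at_top_linorder)
  then show ?thesis
    using strict_mono_less_eq[OF assms(1)] by blast
qed

lemma DERIV_damped_upper_bound:
  fixes h x x' :: "real \<Rightarrow> real"
  assumes "\<delta> > 0"
    and dh: "\<And>s. (h has_real_derivative x s) (at s)"
    and x_nonneg: "\<And>s. x s \<ge> 0"
    and dx: "\<And>s. a \<le> s \<Longrightarrow> (x has_real_derivative x' s) (at s)"
    and damped: "\<And>s. a \<le> s \<Longrightarrow> x' s \<le> - \<delta> * x s"
  shows "h b \<le> h a + x a / \<delta>"
proof (cases "a \<le> b")
  case True
  let ?k = "\<lambda>s. h s + x s / \<delta>"
  have "?k b \<le> ?k a"
  proof (rule DERIV_nonpos_imp_nonincreasing[OF True])
    fix s assume "a \<le> s" "s \<le> b"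
    have "(?k has_real_derivative x s + x' s / \<delta>) (at s)"
      using \<open>a \<le> s\<close> by (intro DERIV_add dh DERIV_cdivide dx)
    moreover have "x s + x' s / \<delta> \<le> 0"
      using damped[OF \<open>a \<le> s\<close>] \<open>\<delta> > 0\<close> by (simp add: field_simps)
    ultimately show "\<exists>y. (?k has_real_derivative y) (at s) \<and> y \<le> 0" by blast
  qed
  moreover have "h b \<le> ?k b"
    using x_nonneg[of b] \<open>\<delta> > 0\<close> by simp
  ultimately show ?thesis by linarith
next
  case False
  have "h b \<le> h a"
  proof (rule DERIV_nonneg_imp_nondecreasing[of b a h])
    show "b \<le> a"
      using False by simp
    show "\<exists>y. (h has_real_derivative y) (at s) \<and> y \<ge> 0" for s
      using dh x_nonneg by blast
  qed
  moreover have "x a / \<delta> \<ge> 0"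
    using x_nonneg[of a] \<open>\<delta> > 0\<close> by simp
  ultimately show ?thesis by linarith
qed

lemma DERIV_eventually_damped_bdd_above:
  fixes h x x' :: "real \<Rightarrow> real"
  assumes "\<delta> > 0"
    and dh: "\<And>s. (h has_real_derivative x s) (at s)"
    and x_nonneg: "\<And>s. x s \<ge> 0"
    and dx: "\<And>s. (x has_real_derivative x' s) (at s)"
    and "\<forall>\<^sub>F s in at_top. x' s \<le> - \<delta> * x s"
  shows "\<exists>B. \<forall>s. h s \<le> B"
proof -
  obtain a where "\<And>s. a \<le> s \<Longrightarrow> x' s \<le> - \<delta> * x s"
    using assms(5) by (auto simp: eventually_at_top_linorder)
  then have "h s \<le> h a + x a / \<delta>" for s
    by (rule DERIV_damped_upper_bound[OF \<open>\<delta> > 0\<close> dh x_nonneg dx])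
  then show ?thesis by blast
qed

lemma increasing_bounded_limit_reparam:
  fixes T G :: "real \<Rightarrow> real"
  assumes T: "strict_mono T" and "strict_mono G" and bound: "\<And>s. G s \<le> B" and "\<And>s. G s > 0"
  shows "\<exists>c>0. \<forall>e>0. \<exists>t0. \<forall>s. T s \<ge> t0 \<longrightarrow> \<bar>G s - c\<bar> < e"
proof -
  have bdd: "bdd_above (range G)"
    by (rule bdd_aboveI2[where M = B]) (rule bound)
  have lim: "(G \<longlongrightarrow> (SUP s. G s)) at_top"
    using \<open>strict_mono G\<close> bdd by (intro mono_bdd_above_tendsto_SUP strict_mono_mono)
  have "\<exists>t0. \<forall>s. T s \<ge> t0 \<longrightarrow> \<bar>G s - (SUP s. G s)\<bar> < e" if "e > 0" for e
  proof -
    have "\<forall>\<^sub>F s in at_top. \<bar>G s - (SUP s. G s)\<bar> < e"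
      using lim \<open>e > 0\<close> by (auto simp: tendsto_iff dist_real_def)
    then show ?thesis
      by (rule eventually_at_top_strict_mono_reparam[OF T])
  qed
  moreover have "(SUP s. G s) > 0"
    using \<open>G 0 > 0\<close> cSUP_upper[OF UNIV_I bdd, of 0] by linarith
  ultimately show ?thesis by blast
qed

lemma isCont_sumsqX:
  assumes "\<And>j. j \<in> {1..r} \<Longrightarrow> isCont (\<lambda>s. X s j) x"
  shows "isCont (sumsqX r X) x"
  unfolding sumsqX_def using assms by (intro continuous_intros) auto

lemma has_real_derivative_expfac:
  assumes "\<And>j x. j \<in> {1..r} \<Longrightarrow> isCont (\<lambda>s. X s j) x"
  shows "(expfac r X s0 has_real_derivative expfac r X s0 x * sumsqX r X x) (at x)"
  unfolding expfac_def
  by (rule DERIV_chain2[OF DERIV_exp has_real_derivative_interval_integral])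
     (rule isCont_sumsqX[OF assms])

lemma strict_mono_tcoord:
  assumes "\<And>j x. j \<in> {1..r} \<Longrightarrow> isCont (\<lambda>s. X s j) x"
  shows "strict_mono (tcoord r X s0)"
proof -
  have "isCont (expfac r X s0) x" for x
    using has_real_derivative_expfac[OF assms] by (rule DERIV_isCont)
  then have "(tcoord r X s0 has_real_derivative expfac r X s0 x) (at x)" for x
    unfolding tcoord_def by (rule has_real_derivative_interval_integral)
  moreover have "expfac r X s0 x > 0" for x
    by (simp add: expfac_def)
  ultimately show ?thesis
    by (blast intro: strict_monoI DERIV_pos_imp_increasing)
qed

lemma gwarp_pos:
  assumes "d i > 0" and "Y s i > 0"
  shows "gwarp r d X Y s0 i s > 0"
  using assms by (simp add: gwarp_def expfac_def)

text \<open>The factor \<Sum> X_j^2 of Y_1' cancels against the derivative of the exponential factor.\<close>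

lemma has_real_derivative_ln_gwarp1:
  assumes "d 1 = 1"
    and "\<And>j x. j \<in> {1..r} \<Longrightarrow> isCont (\<lambda>s. X s j) x"
    and dY1: "((\<lambda>s. Y s 1) has_real_derivative Y x 1 * (sumsqX r X x - X x 1)) (at x)"
    and Y1pos: "\<And>s. Y s 1 > 0"
  shows "((\<lambda>s. ln (gwarp r d X Y s0 1 s)) has_real_derivative X x 1) (at x)"
proof -
  have "ln (gwarp r d X Y s0 1 s) = (LBINT \<sigma>=s0..s. sumsqX r X \<sigma>) - ln (Y s 1)" for s
    using Y1pos[of s] \<open>d 1 = 1\<close> by (simp add: gwarp_def expfac_def ln_div)
  moreover have "((\<lambda>s. LBINT \<sigma>=s0..s. sumsqX r X \<sigma>) has_real_derivative sumsqX r X x) (at x)"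
    by (intro has_real_derivative_interval_integral isCont_sumsqX assms(2))
  moreover have "((\<lambda>s. ln (Y s 1)) has_real_derivative sumsqX r X x - X x 1) (at x)"
    by (rule DERIV_cong[OF DERIV_chain2[OF DERIV_ln dY1]]) (use Y1pos[of x] in auto)
  ultimately show ?thesis
    using DERIV_diff by fastforce
qed

lemma eventually_sumsqX_le:
  assumes "2 \<le> r"
    and locus: "\<And>s. sumsqX r X s + (\<Sum>i=2..r. lam i * (Y s i)^2) = 1"
    and lam_nonneg: "\<And>i. i \<in> {2..r} \<Longrightarrow> lam i \<ge> 0"
    and "lam 2 > 0"
    and Y2: "((\<lambda>s. Y s 2) \<longlongrightarrow> l) at_top" and "l \<noteq> 0"
  shows "\<exists>\<delta>>0. \<forall>\<^sub>F s in at_top. sumsqX r X s - 1 \<le> - \<delta>"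
proof -
  let ?\<delta> = "lam 2 * l^2 / 2"
  have "((\<lambda>s. lam 2 * (Y s 2)^2) \<longlongrightarrow> lam 2 * l^2) at_top"
    by (intro tendsto_intros Y2)
  moreover have "?\<delta> < lam 2 * l^2"
    using \<open>lam 2 > 0\<close> \<open>l \<noteq> 0\<close> by simp
  ultimately have "\<forall>\<^sub>F s in at_top. ?\<delta> < lam 2 * (Y s 2)^2"
    by (rule order_tendstoD)
  then have "\<forall>\<^sub>F s in at_top. sumsqX r X s - 1 \<le> - ?\<delta>"
  proof (rule eventually_mono)
    fix s assume "?\<delta> < lam 2 * (Y s 2)^2"
    moreover have "lam 2 * (Y s 2)^2 \<le> (\<Sum>i=2..r. lam i * (Y s i)^2)"
      using \<open>2 \<le> r\<close> lam_nonneg by (intro member_le_sum) auto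
    ultimately show "sumsqX r X s - 1 \<le> - ?\<delta>"
      using locus[of s] by linarith
  qed
  moreover have "?\<delta> > 0"
    using \<open>lam 2 > 0\<close> \<open>l \<noteq> 0\<close> by simp
  ultimately show ?thesis by blast
qed

lemma endpoint_Y2_nonzero:
  fixes r :: nat and d :: "nat \<Rightarrow> nat" and lam :: "nat \<Rightarrow> real"
  assumes "2 \<le> r" and "d 1 = 1" and "d 2 > 1" and "lam 2 > 0"
  shows "sqrt ((real (\<Sum>j=1..r. d j) - 2) / lam 2)
      * (sqrt (real (d 2)) / (real (\<Sum>j=1..r. d j) - 1)) \<noteq> 0"
proof -
  have "d 1 + d 2 \<le> (\<Sum>j=1..r. d j)"
    using sum_mono2[of "{1..r}" "{1,2}" d] \<open>2 \<le> r\<close> by auto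
  then have "real (\<Sum>j=1..r. d j) \<ge> 3"
    using assms(2,3) by linarith
  then show ?thesis
    using assms(3,4) by simp
qed

theorem lemma4p7:
  fixes r :: nat and d :: "nat \<Rightarrow> nat" and lam :: "nat \<Rightarrow> real"
    and X Y :: "real \<Rightarrow> nat \<Rightarrow> real" and s0 :: real
  assumes r2: "r \<ge> 2"
    and d1: "d 1 = 1" and lam1: "lam 1 = 0"
    and dpos: "\<And>i. i \<in> {2..r} \<Longrightarrow> d i > 1"
    and lampos: "\<And>i. i \<in> {2..r} \<Longrightarrow> lam i > 0"
    and odeX: "\<And>s i. i \<in> {1..r} \<Longrightarrow>
      ((\<lambda>s. X s i) has_real_derivative
         (X s i * ((\<Sum>j=1..r. (X s j)^2) - 1) + lam i * (Y s i)^2 / sqrt (real (d i)))) (at s)"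
    and odeY: "\<And>s i. i \<in> {1..r} \<Longrightarrow>
      ((\<lambda>s. Y s i) has_real_derivative
         (Y s i * ((\<Sum>j=1..r. (X s j)^2) - X s i / sqrt (real (d i))))) (at s)"
    and startX1: "((\<lambda>s. X s 1) \<longlongrightarrow> 1) at_bot"
    and startY1: "((\<lambda>s. Y s 1) \<longlongrightarrow> 1) at_bot"
    and startX: "\<And>i. i \<in> {2..r} \<Longrightarrow> ((\<lambda>s. X s i) \<longlongrightarrow> 0) at_bot"
    and startY: "\<And>i. i \<in> {2..r} \<Longrightarrow> ((\<lambda>s. Y s i) \<longlongrightarrow> 0) at_bot"
    and locus1: "\<And>s. (\<Sum>i=1..r. (X s i)^2) + (\<Sum>i=2..r. lam i * (Y s i)^2) = 1"
    and locus2: "\<And>s. (\<Sum>i=1..r. sqrt (real (d i)) * X s i) = 1"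
    and Xpos: "\<And>s i. i \<in> {1..r} \<Longrightarrow> X s i > 0"
    and Ypos: "\<And>s i. i \<in> {1..r} \<Longrightarrow> Y s i > 0"
    and endX1: "((\<lambda>s. X s 1) \<longlongrightarrow> 0) at_top"
    and endX: "\<And>i. i \<in> {2..r} \<Longrightarrow>
      ((\<lambda>s. X s i) \<longlongrightarrow> sqrt (real (d i)) / (real (\<Sum>j=1..r. d j) - 1)) at_top"
    and endY: "\<And>i. i \<in> {2..r} \<Longrightarrow>
      ((\<lambda>s. Y s i) \<longlongrightarrow> sqrt ((real (\<Sum>j=1..r. d j) - 2) / lam i)
          * (sqrt (real (d i)) / (real (\<Sum>j=1..r. d j) - 1))) at_top"
  shows "(\<forall>s1 s2. tcoord r X s0 s1 < tcoord r X s0 s2 \<longrightarrow>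
            (gwarp r d X Y s0 1 s1)^2 < (gwarp r d X Y s0 1 s2)^2)
       \<and> (\<exists>B. \<forall>s. (gwarp r d X Y s0 1 s)^2 \<le> B)
       \<and> (\<exists>c>0. \<forall>e>0. \<exists>t0. \<forall>s. tcoord r X s0 s \<ge> t0 \<longrightarrow>
            \<bar>(gwarp r d X Y s0 1 s)^2 - c\<bar> < e)"
proof -
  have r1: "1 \<in> {1..r}" "2 \<in> {2..r}"
    using r2 by auto
  have contX: "isCont (\<lambda>s. X s j) x" if "j \<in> {1..r}" for j x
    using odeX[OF that] by (rule DERIV_isCont)
  have sumsq: "sumsqX r X s = (\<Sum>j=1..r. (X s j)^2)" for s
    by (simp add: sumsqX_def)
  define L where "L s = ln (gwarp r d X Y s0 1 s)" for s
  have dL: "(L has_real_derivative X s 1) (at s)" for s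
    unfolding L_def using odeY[OF r1(1)] d1 Ypos[OF r1(1)]
    by (intro has_real_derivative_ln_gwarp1 contX) (auto simp: sumsq)
  have g1_sq: "(gwarp r d X Y s0 1 s)^2 = exp (2 * L s)" for s
    using gwarp_pos[of d 1 Y s r X s0] d1 Ypos[OF r1(1)]
    by (simp add: L_def powr_realpow[symmetric] powr_def)
  have L_mono: "strict_mono L"
    using dL Xpos[OF r1(1)] by (blast intro: strict_monoI DERIV_pos_imp_increasing)
  have locus: "sumsqX r X s + (\<Sum>i=2..r. lam i * (Y s i)^2) = 1" for s
    using locus1 by (simp add: sumsq)
  obtain \<delta> where "\<delta> > 0" and margin: "\<forall>\<^sub>F s in at_top. sumsqX r X s - 1 \<le> - \<delta>"
    using eventually_sumsqX_le[OF r2 locus less_imp_le[OF lampos] lampos[OF r1(2)] endY[OF r1(2)]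
        endpoint_Y2_nonzero[of r d lam, OF r2 d1 dpos[OF r1(2)] lampos[OF r1(2)]]]
    by blast
  have dX1: "((\<lambda>s. X s 1) has_real_derivative X s 1 * (sumsqX r X s - 1)) (at s)" for s
    using odeX[OF r1(1), of s] lam1 by (simp add: sumsq)
  have "\<forall>\<^sub>F s in at_top. X s 1 * (sumsqX r X s - 1) \<le> - \<delta> * X s 1"
    using margin
  proof eventually_elim
    case (elim s)
    show ?case
      using mult_left_mono[OF elim less_imp_le[OF Xpos[OF r1(1), of s]]] by (simp add: mult.commute)
  qed
  then obtain B where "\<And>s. L s \<le> B"
    using DERIV_eventually_damped_bdd_above[OF \<open>\<delta> > 0\<close> dL less_imp_le[OF Xpos[OF r1(1)]] dX1]
    by blast
  then have G_bdd: "exp (2 * L s) \<le> exp (2 * B)" for s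
    by simp
  have T_mono: "strict_mono (tcoord r X s0)"
    using contX by (rule strict_mono_tcoord)
  have G_mono: "strict_mono (\<lambda>s. exp (2 * L s))"
    using L_mono by (simp add: strict_mono_def)
  have "\<forall>s1 s2. tcoord r X s0 s1 < tcoord r X s0 s2 \<longrightarrow> exp (2 * L s1) < exp (2 * L s2)"
    using strict_monoD[OF G_mono] by (simp add: strict_mono_less[OF T_mono])
  moreover have "\<exists>B. \<forall>s. exp (2 * L s) \<le> B"
    using G_bdd by blast
  moreover have "\<exists>c>0. \<forall>e>0. \<exists>t0. \<forall>s. tcoord r X s0 s \<ge> t0 \<longrightarrow> \<bar>exp (2 * L s) - c\<bar> < e"
    using T_mono G_mono G_bdd by (rule increasing_bounded_limit_reparam) simp
  ultimately show ?thesis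
    unfolding g1_sq by blast
qed

end
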